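(* Let $(\mathcal{C},\mathbb{E},\mathfrak{s})$ be an extriangulated category and $\mathcal{I}$ an ideal of $\mathcal{C}$. Consider the statements: (a) there is an additive subfunctor $\mathbb{F}\subseteq\mathbb{E}$ having enough injective morphisms with $\mathcal{I}=\mathrm{Ph}(\mathbb{F})$; (a') there is an additive subfunctor $\mathbb{F}\subseteq\mathbb{E}$ having enough special injective morphisms with $\mathcal{I}=\mathrm{Ph}(\mathbb{F})$; (b) $\mathcal{I}$ is a special precovering ideal; (c) $(\mathcal{I},\mathcal{I}^{\perp_{\mathbb{E}}})$ is a complete $\mathbb{E}$-cotorsion pair; (d) the additive subfunctor $\mathcal{I}^\star\subseteq\mathbb{E}$ has enough special injective morphisms and $\mathcal{I}=\mathrm{Ph}(\mathcal{I}^\star)$. Then: (I) if $\mathcal{C}$ has enough projective morphisms, (a) (and hence (a')) implies (b); (II) if $\mathcal{C}$ has enough injective objects, (b) implies (c); (III) (c) implies (d); (IV) (d) implies (a').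
   Context: An extriangulated category $(\mathcal{C},\mathbb{E},\mathfrak{s})$ (Nakaoka–Palu): additive $\mathcal{C}$, biadditive $\mathbb{E}:\mathcal{C}^{\mathrm{op}}\times\mathcal{C}\to\mathrm{Ab}$, additive realization $\mathfrak{s}$ assigning to each $\delta\in\mathbb{E}(C,A)$ an equivalence class of sequences $A\to B\to C$, forming $\mathbb{E}$-triangles $A\to B\to C\overset{\delta}{\dashrightarrow}$, satisfying (ET1)–(ET4), (ET3)$^{\mathrm{op}}$, (ET4)$^{\mathrm{op}}$. Notation $a_\star\delta=\mathbb{E}(C,a)(\delta)$, $c^\star\delta=\mathbb{E}(c,A)(\delta)$; a morphism of $\mathbb{E}$-triangles is a commuting triple $(a,b,c)$ with $a_\star\delta=c^\star\delta'$. An ideal: class of morphisms with zeros, closed under sums and two-sided composition. Additive subfunctor $\mathbb{F}$: subgroups $\mathbb{F}(C,A)\subseteq\mathbb{E}(C,A)$ stable under $a_\star,c^\star$; $\mathbb{F}$-triangles have extension in $\mathbb{F}$. $\mathrm{Ph}(\mathbb{F})$: morphisms $\varphi:X\to C$ with $\varphi^\star\delta\in\mathbb{F}(X,A)$ for all $\delta\in\mathbb{E}(C,A)$. $\mathbb{F}\text{-}\mathrm{inj}$: morphisms $i:A\to Y$ with $i_\star\delta=0$ for all $\delta\in\mathbb{F}(C,A)$. $\mathcal{I}^\star(X,A)=\{i^\star\delta\mid i\in\mathcal{I}(X,C),\ \delta\in\mathbb{E}(C,A)\}$. $\mathbb{F}$ has enough injective morphisms: every $A$ admits an $\mathbb{F}$-triangle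 $A\xrightarrow{e}B\to C\overset{\delta}{\dashrightarrow}$ with $e\in\mathbb{F}\text{-}\mathrm{inj}$; enough special injective morphisms: moreover there is an $\mathbb{E}$-triangle $A\to B'\to C'\overset{\delta'}{\dashrightarrow}$ and a morphism of $\mathbb{E}$-triangles $(\mathrm{id}_A,b,\varphi)$ from the former to it with $\varphi\in\mathrm{Ph}(\mathbb{F})$. $\mathcal{C}$ has enough projective morphisms: every $C$ admits an $\mathbb{E}$-triangle $K\to P\xrightarrow{p}C\overset{\gamma}{\dashrightarrow}$ with $p^\star\delta=0$ for all $\delta\in\mathbb{E}(C,A)$; enough injective objects: every $A$ admits an $\mathbb{E}$-triangle $A\to E\to C\overset{\delta}{\dashrightarrow}$ with $\mathbb{E}(-,E)=0$. $\mathcal{M}^{\perp_{\mathbb{E}}}=\{g:A\to Y\mid m^\star g_\star\delta=0\ \forall m\in\mathcal{M},\,m:X\to C,\ \forall\delta\in\mathbb{E}(C,A)\}$; ${}^{\perp_{\mathbb{E}}}\mathcal{M}=\{g:X\to C\mid g^\star m_\star\delta=0\ \forall m\in\mathcal{M},\,m:A\to Y,\ \forall\delta\in\mathbb{E}(C,A)\}$. $\mathbb{E}$-cotorsion pair: ideals with $\mathcal{I}={}^{\perp_{\mathbb{E}}}\mathcal{J}$, $\mathcal{J}=\mathcal{I}^{\perp_{\mathbb{E}}}$; complete if $\mathcal{I}$ is special precovering and $\mathcal{J}$ special preenveloping. Special $\mathcal{I}$-precover of $C$: $i:X\to C$ in $\mathcal{I}$ with $\mathbb{E}$-triangles $A\to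 B\to C\overset{\delta}{\dashrightarrow}$, $A'\to X\xrightarrow{i}C\overset{\delta'}{\dashrightarrow}$ and a morphism $(j,b,\mathrm{id}_C)$ between them, $j\in\mathcal{I}^{\perp_{\mathbb{E}}}$. Special $\mathcal{J}$-preenvelope of $A$: $e:A\to X$ in $\mathcal{J}$ with $\mathbb{E}$-triangles $A\xrightarrow{e}X\to Y\overset{\delta}{\dashrightarrow}$, $A\to B\to C\overset{\delta'}{\dashrightarrow}$ and a morphism $(\mathrm{id}_A,b,j)$, $j\in{}^{\perp_{\mathbb{E}}}\mathcal{J}$. Special precovering/preenveloping ideal: every object has one. *)

theory Defs
  imports Main
begin

section \<open>Extriangulated categories (Nakaoka--Palu), encoded as a record\<close>

text \<open>
  Objects have type 'o, morphisms type 'm, extensions type 'e.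
  cmp g f is the composite g after f.  Ex C A is the abelian group E(C,A)
  with operations eadd C A and neutral element ezero C A.
  pull A c delta is c^* delta = E(c,A)(delta); push C a delta is a_* delta = E(C,a)(delta).
  rlz C A delta x y means: the sequence A --x--> B --y--> C belongs to the
  equivalence class s(delta) (for delta in E(C,A)).
\<close>

record ('o,'m,'e) extri =
  ob :: "'o set"
  mor :: "'m set"
  dm :: "'m \<Rightarrow> 'o"
  cd :: "'m \<Rightarrow> 'o"
  cmp :: "'m \<Rightarrow> 'm \<Rightarrow> 'm"
  idm :: "'o \<Rightarrow> 'm"
  madd :: "'m \<Rightarrow> 'm \<Rightarrow> 'm"
  mzero :: "'o \<Rightarrow> 'o \<Rightarrow> 'm"
  Ex :: "'o \<Rightarrow> 'o \<Rightarrow> 'e set"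
  eadd :: "'o \<Rightarrow> 'o \<Rightarrow> 'e \<Rightarrow> 'e \<Rightarrow> 'e"
  ezero :: "'o \<Rightarrow> 'o \<Rightarrow> 'e"
  pull :: "'o \<Rightarrow> 'm \<Rightarrow> 'e \<Rightarrow> 'e"
  push :: "'o \<Rightarrow> 'm \<Rightarrow> 'e \<Rightarrow> 'e"
  rlz :: "'o \<Rightarrow> 'o \<Rightarrow> 'e \<Rightarrow> 'm \<Rightarrow> 'm \<Rightarrow> bool"

definition hom :: "('o,'m,'e) extri \<Rightarrow> 'o \<Rightarrow> 'o \<Rightarrow> 'm set" where
  "hom X A B = {f \<in> mor X. dm X f = A \<and> cd X f = B}"

definition is_category :: "('o,'m,'e) extri \<Rightarrow> bool" where
  "is_category X \<longleftrightarrow>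
     (\<forall>f\<in>mor X. dm X f \<in> ob X \<and> cd X f \<in> ob X)
   \<and> (\<forall>A\<in>ob X. idm X A \<in> hom X A A)
   \<and> (\<forall>A B C f g. f \<in> hom X A B \<longrightarrow> g \<in> hom X B C \<longrightarrow> cmp X g f \<in> hom X A C)
   \<and> (\<forall>A B f. f \<in> hom X A B \<longrightarrow> cmp X (idm X B) f = f \<and> cmp X f (idm X A) = f)
   \<and> (\<forall>A B C D f g h. f \<in> hom X A B \<longrightarrow> g \<in> hom X B C \<longrightarrow> h \<in> hom X C D \<longrightarrow>
        cmp X h (cmp X g f) = cmp X (cmp X h g) f)"

definition is_biproduct ::
  "('o,'m,'e) extri \<Rightarrow> 'o \<Rightarrow> 'o \<Rightarrow> 'o \<Rightarrow> 'm \<Rightarrow> 'm \<Rightarrow> 'm \<Rightarrow> 'm \<Rightarrow> bool" where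
  "is_biproduct X A B S i1 i2 p1 p2 \<longleftrightarrow>
     S \<in> ob X \<and> i1 \<in> hom X A S \<and> i2 \<in> hom X B S \<and> p1 \<in> hom X S A \<and> p2 \<in> hom X S B
   \<and> cmp X p1 i1 = idm X A \<and> cmp X p2 i2 = idm X B
   \<and> cmp X p1 i2 = mzero X B A \<and> cmp X p2 i1 = mzero X A B
   \<and> madd X (cmp X i1 p1) (cmp X i2 p2) = idm X S"

definition is_additive :: "('o,'m,'e) extri \<Rightarrow> bool" where
  "is_additive X \<longleftrightarrow> is_category X
   \<and> (\<forall>A\<in>ob X. \<forall>B\<in>ob X.
        mzero X A B \<in> hom X A B
      \<and> (\<forall>f\<in>hom X A B. \<forall>g\<in>hom X A B. madd X f g \<in> hom X A B)
      \<and> (\<forall>f\<in>hom X A B. \<forall>g\<in>hom X A B. \<forall>h\<in>hom X A B.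
            madd X (madd X f g) h = madd X f (madd X g h))
      \<and> (\<forall>f\<in>hom X A B. \<forall>g\<in>hom X A B. madd X f g = madd X g f)
      \<and> (\<forall>f\<in>hom X A B. madd X f (mzero X A B) = f)
      \<and> (\<forall>f\<in>hom X A B. \<exists>g\<in>hom X A B. madd X f g = mzero X A B))
   \<and> (\<forall>A B C f g h. f \<in> hom X A B \<longrightarrow> g \<in> hom X A B \<longrightarrow> h \<in> hom X B C \<longrightarrow>
        cmp X h (madd X f g) = madd X (cmp X h f) (cmp X h g))
   \<and> (\<forall>A B C f g h. f \<in> hom X B C \<longrightarrow> g \<in> hom X B C \<longrightarrow> h \<in> hom X A B \<longrightarrow>
        cmp X (madd X f g) h = madd X (cmp X f h) (cmp X g h))
   \<and> (\<exists>Z\<in>ob X. \<forall>A\<in>ob X. hom X Z A = {mzero X Z A} \<and> hom X A Z = {mzero X A Z})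
   \<and> (\<forall>A\<in>ob X. \<forall>B\<in>ob X. \<exists>S i1 i2 p1 p2. is_biproduct X A B S i1 i2 p1 p2)"

definition is_biadditive_E :: "('o,'m,'e) extri \<Rightarrow> bool" where
  "is_biadditive_E X \<longleftrightarrow>
     (\<forall>C\<in>ob X. \<forall>A\<in>ob X.
        ezero X C A \<in> Ex X C A
      \<and> (\<forall>d\<in>Ex X C A. \<forall>e\<in>Ex X C A. eadd X C A d e \<in> Ex X C A)
      \<and> (\<forall>d\<in>Ex X C A. \<forall>e\<in>Ex X C A. \<forall>f\<in>Ex X C A.
            eadd X C A (eadd X C A d e) f = eadd X C A d (eadd X C A e f))
      \<and> (\<forall>d\<in>Ex X C A. \<forall>e\<in>Ex X C A. eadd X C A d e = eadd X C A e d)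
      \<and> (\<forall>d\<in>Ex X C A. eadd X C A d (ezero X C A) = d)
      \<and> (\<forall>d\<in>Ex X C A. \<exists>e\<in>Ex X C A. eadd X C A d e = ezero X C A))
   \<and> (\<forall>A\<in>ob X. \<forall>C C' c. c \<in> hom X C' C \<longrightarrow>
        (\<forall>d\<in>Ex X C A. pull X A c d \<in> Ex X C' A)
      \<and> (\<forall>d\<in>Ex X C A. \<forall>e\<in>Ex X C A.
            pull X A c (eadd X C A d e) = eadd X C' A (pull X A c d) (pull X A c e))
      \<and> (\<forall>c2\<in>hom X C' C. \<forall>d\<in>Ex X C A.
            pull X A (madd X c c2) d = eadd X C' A (pull X A c d) (pull X A c2 d))
      \<and> (\<forall>C'' c'. c' \<in> hom X C'' C' \<longrightarrow> (\<forall>d\<in>Ex X C A.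
            pull X A (cmp X c c') d = pull X A c' (pull X A c d))))
   \<and> (\<forall>A\<in>ob X. \<forall>C\<in>ob X. \<forall>d\<in>Ex X C A. pull X A (idm X C) d = d)
   \<and> (\<forall>C\<in>ob X. \<forall>A A' a. a \<in> hom X A A' \<longrightarrow>
        (\<forall>d\<in>Ex X C A. push X C a d \<in> Ex X C A')
      \<and> (\<forall>d\<in>Ex X C A. \<forall>e\<in>Ex X C A.
            push X C a (eadd X C A d e) = eadd X C A' (push X C a d) (push X C a e))
      \<and> (\<forall>a2\<in>hom X A A'. \<forall>d\<in>Ex X C A.
            push X C (madd X a a2) d = eadd X C A' (push X C a d) (push X C a2 d))
      \<and> (\<forall>A'' a'. a' \<in> hom X A' A'' \<longrightarrow> (\<forall>d\<in>Ex X C A.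
            push X C (cmp X a' a) d = push X C a' (push X C a d))))
   \<and> (\<forall>A\<in>ob X. \<forall>C\<in>ob X. \<forall>d\<in>Ex X C A. push X C (idm X A) d = d)
   \<and> (\<forall>A A' C C' a c d. a \<in> hom X A A' \<longrightarrow> c \<in> hom X C' C \<longrightarrow> d \<in> Ex X C A \<longrightarrow>
        push X C' a (pull X A c d) = pull X A' c (push X C a d))"

definition is_iso :: "('o,'m,'e) extri \<Rightarrow> 'o \<Rightarrow> 'o \<Rightarrow> 'm \<Rightarrow> bool" where
  "is_iso X B B' b \<longleftrightarrow> b \<in> hom X B B' \<and>
     (\<exists>b'\<in>hom X B' B. cmp X b' b = idm X B \<and> cmp X b b' = idm X B')"

definition seq_equiv ::
  "('o,'m,'e) extri \<Rightarrow> 'o \<Rightarrow> 'o \<Rightarrow> 'm \<Rightarrow> 'm \<Rightarrow> 'm \<Rightarrow> 'm \<Rightarrow> bool" where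
  "seq_equiv X A C x y x' y' \<longleftrightarrow>
     x \<in> hom X A (cd X x) \<and> y \<in> hom X (cd X x) C \<and>
     x' \<in> hom X A (cd X x') \<and> y' \<in> hom X (cd X x') C \<and>
     (\<exists>b. is_iso X (cd X x) (cd X x') b \<and> cmp X b x = x' \<and> cmp X y' b = y)"

definition tri_morph ::
  "('o,'m,'e) extri \<Rightarrow> 'o \<Rightarrow> 'o \<Rightarrow> 'e \<Rightarrow> 'm \<Rightarrow> 'm
     \<Rightarrow> 'o \<Rightarrow> 'o \<Rightarrow> 'e \<Rightarrow> 'm \<Rightarrow> 'm \<Rightarrow> 'm \<Rightarrow> 'm \<Rightarrow> 'm \<Rightarrow> bool" where
  "tri_morph X A C d x y A' C' d' x' y' a b c \<longleftrightarrow>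
     a \<in> hom X A A' \<and> b \<in> hom X (cd X x) (cd X x') \<and> c \<in> hom X C C'
   \<and> cmp X b x = cmp X x' a \<and> cmp X c y = cmp X y' b
   \<and> push X C a d = pull X A' c d'"

text \<open>(ET2): s is an additive realization of E.  The predicate rlz C A delta
  describes exactly one equivalence class of sequences for each delta in E(C,A).\<close>
definition is_additive_realization :: "('o,'m,'e) extri \<Rightarrow> bool" where
  "is_additive_realization X \<longleftrightarrow>
     (\<forall>C A d x y. rlz X C A d x y \<longrightarrow>
        C \<in> ob X \<and> A \<in> ob X \<and> d \<in> Ex X C A \<and> cd X x \<in> ob X \<and>
        x \<in> hom X A (cd X x) \<and> y \<in> hom X (cd X x) C)
   \<and> (\<forall>C\<in>ob X. \<forall>A\<in>ob X. \<forall>d\<in>Ex X C A. \<exists>x y. rlz X C A d x y)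
   \<and> (\<forall>C A d x y x' y'. rlz X C A d x y \<longrightarrow>
        (rlz X C A d x' y' \<longleftrightarrow> seq_equiv X A C x y x' y'))
   \<and> (\<forall>C A d x y C' A' d' x' y' a c.
        rlz X C A d x y \<longrightarrow> rlz X C' A' d' x' y' \<longrightarrow>
        a \<in> hom X A A' \<longrightarrow> c \<in> hom X C C' \<longrightarrow> push X C a d = pull X A' c d' \<longrightarrow>
        (\<exists>b. tri_morph X A C d x y A' C' d' x' y' a b c))
   \<and> (\<forall>A\<in>ob X. \<forall>C\<in>ob X. \<forall>S i1 i2 p1 p2.
        is_biproduct X A C S i1 i2 p1 p2 \<longrightarrow> rlz X C A (ezero X C A) i1 p2)
   \<and> (\<forall>C A d x y C' A' d' x' y'
        SA ia ia' pa pa' SC ic ic' pc pc' SB ib ib' pb pb' t.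
        rlz X C A d x y \<longrightarrow> rlz X C' A' d' x' y' \<longrightarrow>
        is_biproduct X A A' SA ia ia' pa pa' \<longrightarrow>
        is_biproduct X C C' SC ic ic' pc pc' \<longrightarrow>
        is_biproduct X (cd X x) (cd X x') SB ib ib' pb pb' \<longrightarrow>
        t \<in> Ex X SC SA \<longrightarrow>
        push X C pa (pull X SA ic t) = d \<longrightarrow>
        push X C' pa' (pull X SA ic' t) = d' \<longrightarrow>
        push X C' pa (pull X SA ic' t) = ezero X C' A \<longrightarrow>
        push X C pa' (pull X SA ic t) = ezero X C A' \<longrightarrow>
        rlz X SC SA t
          (madd X (cmp X ib (cmp X x pa)) (cmp X ib' (cmp X x' pa')))
          (madd X (cmp X ic (cmp X y pb)) (cmp X ic' (cmp X y' pb'))))"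

definition ET3 :: "('o,'m,'e) extri \<Rightarrow> bool" where
  "ET3 X \<longleftrightarrow> (\<forall>C A d x y C' A' d' x' y' a b.
     rlz X C A d x y \<longrightarrow> rlz X C' A' d' x' y' \<longrightarrow>
     a \<in> hom X A A' \<longrightarrow> b \<in> hom X (cd X x) (cd X x') \<longrightarrow> cmp X b x = cmp X x' a \<longrightarrow>
     (\<exists>c. tri_morph X A C d x y A' C' d' x' y' a b c))"

definition ET3op :: "('o,'m,'e) extri \<Rightarrow> bool" where
  "ET3op X \<longleftrightarrow> (\<forall>C A d x y C' A' d' x' y' b c.
     rlz X C A d x y \<longrightarrow> rlz X C' A' d' x' y' \<longrightarrow>
     b \<in> hom X (cd X x) (cd X x') \<longrightarrow> c \<in> hom X C C' \<longrightarrow> cmp X c y = cmp X y' b \<longrightarrow>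
     (\<exists>a. tri_morph X A C d x y A' C' d' x' y' a b c))"

definition ET4 :: "('o,'m,'e) extri \<Rightarrow> bool" where
  "ET4 X \<longleftrightarrow> (\<forall>A B C D F f f' g g' d d'.
     rlz X D A d f f' \<longrightarrow> rlz X F B d' g g' \<longrightarrow> cd X f = B \<longrightarrow> cd X g = C \<longrightarrow>
     (\<exists>E dd e h' e''.
        dd \<in> hom X D E \<and> e \<in> hom X E F \<and> h' \<in> hom X C E \<and>
        cmp X h' g = cmp X dd f' \<and> cmp X e h' = g' \<and>
        rlz X E A e'' (cmp X g f) h' \<and>
        rlz X F D (push X F f' d') dd e \<and>
        pull X A dd e'' = d \<and>
        push X E f e'' = pull X B e d'))"

definition ET4op :: "('o,'m,'e) extri \<Rightarrow> bool" where
  "ET4op X \<longleftrightarrow> (\<forall>A B C D F f f' g g' d d'.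
     rlz X B D d f' f \<longrightarrow> rlz X C F d' g' g \<longrightarrow> cd X f' = A \<longrightarrow> cd X g' = B \<longrightarrow>
     (\<exists>E dd e h' e''.
        dd \<in> hom X D E \<and> e \<in> hom X E F \<and> h' \<in> hom X E A \<and>
        cmp X h' dd = f' \<and> cmp X f h' = cmp X g' e \<and>
        rlz X C E e'' h' (cmp X g f) \<and>
        rlz X F D (pull X D g' d) dd e \<and>
        push X C e e'' = d' \<and>
        push X B dd d = pull X E g e''))"

definition extriangulated :: "('o,'m,'e) extri \<Rightarrow> bool" where
  "extriangulated X \<longleftrightarrow> is_additive X \<and> is_biadditive_E X \<and>
     is_additive_realization X \<and> ET3 X \<and> ET3op X \<and> ET4 X \<and> ET4op X"

definition is_ideal :: "('o,'m,'e) extri \<Rightarrow> 'm set \<Rightarrow> bool" where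
  "is_ideal X I \<longleftrightarrow> I \<subseteq> mor X
   \<and> (\<forall>A\<in>ob X. \<forall>B\<in>ob X. mzero X A B \<in> I)
   \<and> (\<forall>A B f g. f \<in> I \<inter> hom X A B \<longrightarrow> g \<in> I \<inter> hom X A B \<longrightarrow> madd X f g \<in> I)
   \<and> (\<forall>A B C D f g h. f \<in> hom X A B \<longrightarrow> g \<in> I \<inter> hom X B C \<longrightarrow> h \<in> hom X C D \<longrightarrow>
        cmp X h (cmp X g f) \<in> I)"

definition is_additive_subfunctor ::
  "('o,'m,'e) extri \<Rightarrow> ('o \<Rightarrow> 'o \<Rightarrow> 'e set) \<Rightarrow> bool" where
  "is_additive_subfunctor X F \<longleftrightarrow>
     (\<forall>C\<in>ob X. \<forall>A\<in>ob X.
        F C A \<subseteq> Ex X C A \<and> ezero X C A \<in> F C A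
      \<and> (\<forall>d\<in>F C A. \<forall>e\<in>F C A. eadd X C A d e \<in> F C A)
      \<and> (\<forall>d\<in>F C A. \<forall>e\<in>Ex X C A. eadd X C A d e = ezero X C A \<longrightarrow> e \<in> F C A))
   \<and> (\<forall>C A A' a d. a \<in> hom X A A' \<longrightarrow> C \<in> ob X \<longrightarrow> d \<in> F C A \<longrightarrow> push X C a d \<in> F C A')
   \<and> (\<forall>C C' A c d. c \<in> hom X C' C \<longrightarrow> A \<in> ob X \<longrightarrow> d \<in> F C A \<longrightarrow> pull X A c d \<in> F C' A)"

definition Ph :: "('o,'m,'e) extri \<Rightarrow> ('o \<Rightarrow> 'o \<Rightarrow> 'e set) \<Rightarrow> 'm set" where
  "Ph X F = {phi \<in> mor X. \<forall>A\<in>ob X. \<forall>d\<in>Ex X (cd X phi) A.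
               pull X A phi d \<in> F (dm X phi) A}"

definition F_inj :: "('o,'m,'e) extri \<Rightarrow> ('o \<Rightarrow> 'o \<Rightarrow> 'e set) \<Rightarrow> 'm set" where
  "F_inj X F = {i \<in> mor X. \<forall>C\<in>ob X. \<forall>d\<in>F C (dm X i).
                  push X C i d = ezero X C (cd X i)}"

definition Istar :: "('o,'m,'e) extri \<Rightarrow> 'm set \<Rightarrow> 'o \<Rightarrow> 'o \<Rightarrow> 'e set" where
  "Istar X I X0 A = {pull X A i d | i d C. C \<in> ob X \<and> i \<in> I \<inter> hom X X0 C \<and> d \<in> Ex X C A}"

definition enough_inj_morphisms ::
  "('o,'m,'e) extri \<Rightarrow> ('o \<Rightarrow> 'o \<Rightarrow> 'e set) \<Rightarrow> bool" where
  "enough_inj_morphisms X F \<longleftrightarrow> (\<forall>A\<in>ob X. \<exists>C d e y.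
      rlz X C A d e y \<and> d \<in> F C A \<and> e \<in> F_inj X F)"

definition enough_special_inj_morphisms ::
  "('o,'m,'e) extri \<Rightarrow> ('o \<Rightarrow> 'o \<Rightarrow> 'e set) \<Rightarrow> bool" where
  "enough_special_inj_morphisms X F \<longleftrightarrow> (\<forall>A\<in>ob X. \<exists>C d e y.
      rlz X C A d e y \<and> d \<in> F C A \<and> e \<in> F_inj X F \<and>
      (\<exists>C' d' x' y' b phi. rlz X C' A d' x' y' \<and>
         tri_morph X A C d e y A C' d' x' y' (idm X A) b phi \<and> phi \<in> Ph X F))"

definition enough_proj_morphisms :: "('o,'m,'e) extri \<Rightarrow> bool" where
  "enough_proj_morphisms X \<longleftrightarrow> (\<forall>C\<in>ob X. \<exists>K g k p.
      rlz X C K g k p \<and> (\<forall>A\<in>ob X. \<forall>d\<in>Ex X C A. pull X A p d = ezero X (dm X p) A))"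

definition enough_inj_objects :: "('o,'m,'e) extri \<Rightarrow> bool" where
  "enough_inj_objects X \<longleftrightarrow> (\<forall>A\<in>ob X. \<exists>C d x y.
      rlz X C A d x y \<and> (\<forall>Y\<in>ob X. Ex X Y (cd X x) = {ezero X Y (cd X x)}))"

definition rperp :: "('o,'m,'e) extri \<Rightarrow> 'm set \<Rightarrow> 'm set" where
  "rperp X M = {g \<in> mor X. \<forall>m\<in>M. \<forall>d\<in>Ex X (cd X m) (dm X g).
      pull X (cd X g) m (push X (cd X m) g d) = ezero X (dm X m) (cd X g)}"

definition lperp :: "('o,'m,'e) extri \<Rightarrow> 'm set \<Rightarrow> 'm set" where
  "lperp X M = {g \<in> mor X. \<forall>m\<in>M. \<forall>d\<in>Ex X (cd X g) (dm X m).
      pull X (cd X m) g (push X (cd X g) m d) = ezero X (dm X g) (cd X m)}"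

definition is_cotorsion_pair :: "('o,'m,'e) extri \<Rightarrow> 'm set \<Rightarrow> 'm set \<Rightarrow> bool" where
  "is_cotorsion_pair X I J \<longleftrightarrow> is_ideal X I \<and> is_ideal X J \<and>
     I = lperp X J \<and> J = rperp X I"

definition special_precover :: "('o,'m,'e) extri \<Rightarrow> 'm set \<Rightarrow> 'o \<Rightarrow> 'm \<Rightarrow> bool" where
  "special_precover X I C i \<longleftrightarrow> i \<in> I \<and> cd X i = C \<and>
     (\<exists>A d x y A' d' x' b j.
        rlz X C A d x y \<and> rlz X C A' d' x' i \<and>
        tri_morph X A C d x y A' C d' x' i j b (idm X C) \<and> j \<in> rperp X I)"

definition special_precovering :: "('o,'m,'e) extri \<Rightarrow> 'm set \<Rightarrow> bool" where
  "special_precovering X I \<longleftrightarrow> (\<forall>C\<in>ob X. \<exists>i. special_precover X I C i)"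

definition special_preenvelope :: "('o,'m,'e) extri \<Rightarrow> 'm set \<Rightarrow> 'o \<Rightarrow> 'm \<Rightarrow> bool" where
  "special_preenvelope X J A e \<longleftrightarrow> e \<in> J \<and> dm X e = A \<and>
     (\<exists>Y d y C d' x' y' b j.
        rlz X Y A d e y \<and> rlz X C A d' x' y' \<and>
        tri_morph X A Y d e y A C d' x' y' (idm X A) b j \<and> j \<in> lperp X J)"

definition special_preenveloping :: "('o,'m,'e) extri \<Rightarrow> 'm set \<Rightarrow> bool" where
  "special_preenveloping X J \<longleftrightarrow> (\<forall>A\<in>ob X. \<exists>e. special_preenvelope X J A e)"

definition complete_cotorsion_pair :: "('o,'m,'e) extri \<Rightarrow> 'm set \<Rightarrow> 'm set \<Rightarrow> bool" where
  "complete_cotorsion_pair X I J \<longleftrightarrow> is_cotorsion_pair X I J \<and>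
     special_precovering X I \<and> special_preenveloping X J"

end

theory Submission
  imports Defs
begin

text \<open>
  (I) Push out an \<open>\<bbbE>\<close>-triangle \<open>K \<rightarrow> P \<rightarrow> C\<close> whose deflation is a projective morphism along
  an \<open>\<bbbF>\<close>-injective inflation \<open>K \<rightarrow> Y\<close> of an \<open>\<bbbF>\<close>-triangle: the new deflation into \<open>C\<close> is
  \<open>\<bbbF>\<close>-phantom, and since \<open>K \<rightarrow> Y\<close> kills \<open>\<bbbF>\<close> it is right orthogonal to \<open>Ph(\<bbbF>)\<close>; hence that
  deflation is a special \<open>Ph(\<bbbF>)\<close>-precover of \<open>C\<close>.
  (II) Factoring through special precovers shows \<open>\<I> = \<^sup>\<perp>(\<I>\<^sup>\<perp>)\<close>, and pulling back a triangle
  \<open>A \<rightarrow> E \<rightarrow> C\<close> with \<open>E\<close> injective along a special \<open>\<I>\<close>-precover of \<open>C\<close> gives a special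
  \<open>\<I>\<^sup>\<perp>\<close>-preenvelope of \<open>A\<close>.
  (III) The triangle of a special \<open>\<I>\<^sup>\<perp>\<close>-preenvelope is the pullback of a triangle along a morphism
  of \<open>\<^sup>\<perp>(\<I>\<^sup>\<perp>) = \<I>\<close>, hence an \<open>\<I>\<^sup>\<star>\<close>-triangle, and its inflation lies in \<open>\<I>\<^sup>\<perp>\<close>, hence kills
  \<open>\<I>\<^sup>\<star>\<close>; the same equality \<open>\<I> = \<^sup>\<perp>(\<I>\<^sup>\<perp>)\<close> yields \<open>\<I> = Ph(\<I>\<^sup>\<star>)\<close>.
  (IV) only needs that \<open>\<I>\<^sup>\<star>\<close> is an additive subfunctor; closure under sums uses biproducts.
\<close>

locale extriangulated_category =
  fixes X :: "('o,'m,'e) extri"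
  assumes extriangulated: "extriangulated X"
begin

lemma additive: "is_additive X"
  and biadditive: "is_biadditive_E X"
  and realization: "is_additive_realization X"
  and et3: "ET3 X"
  and et3op: "ET3op X"
  using extriangulated unfolding extriangulated_def by simp_all

lemma category: "is_category X"
  using additive unfolding is_additive_def by (rule conjunct1)

lemma homD: "f \<in> hom X A B \<Longrightarrow> f \<in> mor X \<and> dm X f = A \<and> cd X f = B"
  by (simp add: hom_def)

lemma mor_in_hom: "f \<in> mor X \<Longrightarrow> f \<in> hom X (dm X f) (cd X f)"
  by (simp add: hom_def)

lemma dm_cd_ob: "f \<in> mor X \<Longrightarrow> dm X f \<in> ob X \<and> cd X f \<in> ob X"
  using category unfolding is_category_def by blast

lemma hom_ob: assumes "f \<in> hom X A B" shows "A \<in> ob X" "B \<in> ob X"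
  using dm_cd_ob assms unfolding hom_def by auto

lemma id_in_hom: "A \<in> ob X \<Longrightarrow> idm X A \<in> hom X A A"
  using category unfolding is_category_def by blast

lemma comp_in_hom: "f \<in> hom X A B \<Longrightarrow> g \<in> hom X B C \<Longrightarrow> cmp X g f \<in> hom X A C"
  using category unfolding is_category_def by blast

lemma comp_id_left: "f \<in> hom X A B \<Longrightarrow> cmp X (idm X B) f = f"
  using category unfolding is_category_def by blast

lemma comp_id_right: "f \<in> hom X A B \<Longrightarrow> cmp X f (idm X A) = f"
  using category unfolding is_category_def by blast

lemma comp_assoc: "f \<in> hom X A B \<Longrightarrow> g \<in> hom X B C \<Longrightarrow> h \<in> hom X C D \<Longrightarrow>
    cmp X h (cmp X g f) = cmp X (cmp X h g) f"
  using category unfolding is_category_def by blast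

lemmas hom_abelian_group = additive[unfolded is_additive_def, THEN conjunct2, THEN conjunct1]

lemma mzero_in_hom: "A \<in> ob X \<Longrightarrow> B \<in> ob X \<Longrightarrow> mzero X A B \<in> hom X A B"
  using hom_abelian_group by blast

lemma madd_in_hom: "f \<in> hom X A B \<Longrightarrow> g \<in> hom X A B \<Longrightarrow> madd X f g \<in> hom X A B"
  using hom_abelian_group hom_ob by blast

lemma madd_mzero: "f \<in> hom X A B \<Longrightarrow> madd X f (mzero X A B) = f"
  using hom_abelian_group hom_ob by blast

lemma biproduct_exists: "A \<in> ob X \<Longrightarrow> B \<in> ob X \<Longrightarrow> \<exists>S i1 i2 p1 p2. is_biproduct X A B S i1 i2 p1 p2"
  using additive unfolding is_additive_def by blast

lemma biproductD:
  assumes "is_biproduct X A B S i1 i2 p1 p2"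
  shows "S \<in> ob X" "i1 \<in> hom X A S" "i2 \<in> hom X B S" "p1 \<in> hom X S A" "p2 \<in> hom X S B"
    "cmp X p1 i1 = idm X A" "cmp X p2 i2 = idm X B"
    "cmp X p1 i2 = mzero X B A" "cmp X p2 i1 = mzero X A B"
  using assms unfolding is_biproduct_def by auto

subsection \<open>The bifunctor \<open>\<bbbE>\<close>\<close>

lemmas Ex_abelian_group = biadditive[unfolded is_biadditive_E_def, THEN conjunct1]
lemmas pull_additive = biadditive[unfolded is_biadditive_E_def, THEN conjunct2, THEN conjunct1]
lemmas pull_identity = biadditive[unfolded is_biadditive_E_def, THEN conjunct2, THEN conjunct2, THEN conjunct1]
lemmas push_additive =
  biadditive[unfolded is_biadditive_E_def, THEN conjunct2, THEN conjunct2, THEN conjunct2, THEN conjunct1]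
lemmas push_identity = biadditive[unfolded is_biadditive_E_def,
  THEN conjunct2, THEN conjunct2, THEN conjunct2, THEN conjunct2, THEN conjunct1]
lemmas push_pull_commute = biadditive[unfolded is_biadditive_E_def,
  THEN conjunct2, THEN conjunct2, THEN conjunct2, THEN conjunct2, THEN conjunct2]

lemma ezero_in_Ex: "C \<in> ob X \<Longrightarrow> A \<in> ob X \<Longrightarrow> ezero X C A \<in> Ex X C A"
  using Ex_abelian_group by blast

lemma eadd_in_Ex:
  "C \<in> ob X \<Longrightarrow> A \<in> ob X \<Longrightarrow> d \<in> Ex X C A \<Longrightarrow> e \<in> Ex X C A \<Longrightarrow> eadd X C A d e \<in> Ex X C A"
  using Ex_abelian_group by blast

lemma eadd_assoc:
  "C \<in> ob X \<Longrightarrow> A \<in> ob X \<Longrightarrow> d \<in> Ex X C A \<Longrightarrow> e \<in> Ex X C A \<Longrightarrow> f \<in> Ex X C A \<Longrightarrow>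
    eadd X C A (eadd X C A d e) f = eadd X C A d (eadd X C A e f)"
  using Ex_abelian_group by blast

lemma eadd_comm:
  "C \<in> ob X \<Longrightarrow> A \<in> ob X \<Longrightarrow> d \<in> Ex X C A \<Longrightarrow> e \<in> Ex X C A \<Longrightarrow> eadd X C A d e = eadd X C A e d"
  using Ex_abelian_group by blast

lemma eadd_ezero: "C \<in> ob X \<Longrightarrow> A \<in> ob X \<Longrightarrow> d \<in> Ex X C A \<Longrightarrow> eadd X C A d (ezero X C A) = d"
  using Ex_abelian_group by blast

lemma eadd_inverse:
  "C \<in> ob X \<Longrightarrow> A \<in> ob X \<Longrightarrow> d \<in> Ex X C A \<Longrightarrow> \<exists>e\<in>Ex X C A. eadd X C A d e = ezero X C A"
  using Ex_abelian_group by blast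

lemma pull_in_Ex: "A \<in> ob X \<Longrightarrow> c \<in> hom X C' C \<Longrightarrow> d \<in> Ex X C A \<Longrightarrow> pull X A c d \<in> Ex X C' A"
  using pull_additive by blast

lemma pull_eadd: "A \<in> ob X \<Longrightarrow> c \<in> hom X C' C \<Longrightarrow> d \<in> Ex X C A \<Longrightarrow> e \<in> Ex X C A \<Longrightarrow>
    pull X A c (eadd X C A d e) = eadd X C' A (pull X A c d) (pull X A c e)"
  using pull_additive by blast

lemma pull_madd: "A \<in> ob X \<Longrightarrow> c \<in> hom X C' C \<Longrightarrow> c' \<in> hom X C' C \<Longrightarrow> d \<in> Ex X C A \<Longrightarrow>
    pull X A (madd X c c') d = eadd X C' A (pull X A c d) (pull X A c' d)"
  using pull_additive by blast

lemma pull_comp: "A \<in> ob X \<Longrightarrow> c \<in> hom X C' C \<Longrightarrow> c' \<in> hom X C'' C' \<Longrightarrow> d \<in> Ex X C A \<Longrightarrow>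
    pull X A (cmp X c c') d = pull X A c' (pull X A c d)"
  using pull_additive by blast

lemma pull_id: "A \<in> ob X \<Longrightarrow> C \<in> ob X \<Longrightarrow> d \<in> Ex X C A \<Longrightarrow> pull X A (idm X C) d = d"
  using pull_identity by blast

lemma push_in_Ex: "C \<in> ob X \<Longrightarrow> a \<in> hom X A A' \<Longrightarrow> d \<in> Ex X C A \<Longrightarrow> push X C a d \<in> Ex X C A'"
  using push_additive by blast

lemma push_eadd: "C \<in> ob X \<Longrightarrow> a \<in> hom X A A' \<Longrightarrow> d \<in> Ex X C A \<Longrightarrow> e \<in> Ex X C A \<Longrightarrow>
    push X C a (eadd X C A d e) = eadd X C A' (push X C a d) (push X C a e)"
  using push_additive by blast

lemma push_madd: "C \<in> ob X \<Longrightarrow> a \<in> hom X A A' \<Longrightarrow> a' \<in> hom X A A' \<Longrightarrow> d \<in> Ex X C A \<Longrightarrow>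
    push X C (madd X a a') d = eadd X C A' (push X C a d) (push X C a' d)"
  using push_additive by blast

lemma push_comp: "C \<in> ob X \<Longrightarrow> a \<in> hom X A A' \<Longrightarrow> a' \<in> hom X A' A'' \<Longrightarrow> d \<in> Ex X C A \<Longrightarrow>
    push X C (cmp X a' a) d = push X C a' (push X C a d)"
  using push_additive by blast

lemma push_id: "A \<in> ob X \<Longrightarrow> C \<in> ob X \<Longrightarrow> d \<in> Ex X C A \<Longrightarrow> push X C (idm X A) d = d"
  using push_identity by blast

lemma push_pull: "a \<in> hom X A A' \<Longrightarrow> c \<in> hom X C' C \<Longrightarrow> d \<in> Ex X C A \<Longrightarrow>
    push X C' a (pull X A c d) = pull X A' c (push X C a d)"
  using push_pull_commute by blast

lemma eadd_idem_eq_ezero: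
  assumes "C \<in> ob X" "A \<in> ob X" "h \<in> Ex X C A" "eadd X C A h h = h"
  shows "h = ezero X C A"
proof -
  obtain g where g: "g \<in> Ex X C A" "eadd X C A h g = ezero X C A"
    using eadd_inverse assms by blast
  have "h = eadd X C A h (eadd X C A h g)" using eadd_ezero assms g by simp
  also have "\<dots> = eadd X C A (eadd X C A h h) g" using eadd_assoc[OF assms(1-3,3) g(1)] by simp
  finally show ?thesis using assms g by simp
qed

lemma eadd_inverse_unique:
  assumes "C \<in> ob X" "A \<in> ob X" "d \<in> Ex X C A" "e \<in> Ex X C A" "e' \<in> Ex X C A"
    and "eadd X C A d e = ezero X C A" "eadd X C A d e' = ezero X C A"
  shows "e = e'"
proof -
  have "e = eadd X C A e (eadd X C A d e')" using eadd_ezero assms by simp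
  also have "\<dots> = eadd X C A (eadd X C A e d) e'" using eadd_assoc assms by simp
  also have "\<dots> = eadd X C A (eadd X C A d e) e'" using eadd_comm assms by simp
  also have "\<dots> = e'" using assms eadd_comm eadd_ezero ezero_in_Ex by metis
  finally show ?thesis .
qed

lemma pull_ezero:
  assumes "A \<in> ob X" "c \<in> hom X C' C"
  shows "pull X A c (ezero X C A) = ezero X C' A"
proof -
  have ob: "C \<in> ob X" "C' \<in> ob X" using hom_ob assms by auto
  have z: "ezero X C A \<in> Ex X C A" using ezero_in_Ex ob assms by simp
  have "pull X A c (ezero X C A) = pull X A c (eadd X C A (ezero X C A) (ezero X C A))"
    using eadd_ezero z ob assms by simp
  also have "\<dots> = eadd X C' A (pull X A c (ezero X C A)) (pull X A c (ezero X C A))"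
    using pull_eadd assms z by blast
  finally show ?thesis using eadd_idem_eq_ezero pull_in_Ex assms z ob by metis
qed

lemma push_ezero:
  assumes "C \<in> ob X" "a \<in> hom X A A'"
  shows "push X C a (ezero X C A) = ezero X C A'"
proof -
  have ob: "A \<in> ob X" "A' \<in> ob X" using hom_ob assms by auto
  have z: "ezero X C A \<in> Ex X C A" using ezero_in_Ex ob assms by simp
  have "push X C a (ezero X C A) = push X C a (eadd X C A (ezero X C A) (ezero X C A))"
    using eadd_ezero z ob assms by simp
  also have "\<dots> = eadd X C A' (push X C a (ezero X C A)) (push X C a (ezero X C A))"
    using push_eadd assms z by blast
  finally show ?thesis using eadd_idem_eq_ezero push_in_Ex assms z ob by metis
qed

lemma pull_mzero:
  assumes "A \<in> ob X" "C' \<in> ob X" "C \<in> ob X" "d \<in> Ex X C A"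
  shows "pull X A (mzero X C' C) d = ezero X C' A"
proof -
  have z: "mzero X C' C \<in> hom X C' C" using mzero_in_hom assms by simp
  have "pull X A (mzero X C' C) d = pull X A (madd X (mzero X C' C) (mzero X C' C)) d"
    using madd_mzero z by simp
  also have "\<dots> = eadd X C' A (pull X A (mzero X C' C) d) (pull X A (mzero X C' C) d)"
    using pull_madd z assms by blast
  finally show ?thesis using eadd_idem_eq_ezero pull_in_Ex assms z by metis
qed

lemma push_mzero:
  assumes "A \<in> ob X" "A' \<in> ob X" "C \<in> ob X" "d \<in> Ex X C A"
  shows "push X C (mzero X A A') d = ezero X C A'"
proof -
  have z: "mzero X A A' \<in> hom X A A'" using mzero_in_hom assms by simp
  have "push X C (mzero X A A') d = push X C (madd X (mzero X A A') (mzero X A A')) d"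
    using madd_mzero z by simp
  also have "\<dots> = eadd X C A' (push X C (mzero X A A') d) (push X C (mzero X A A') d)"
    using push_madd z assms by blast
  finally show ?thesis using eadd_idem_eq_ezero push_in_Ex assms z by metis
qed

subsection \<open>Realizations and the exact sequences of an \<open>\<bbbE>\<close>-triangle\<close>

lemmas realization_objects = realization[unfolded is_additive_realization_def, THEN conjunct1]
lemmas realization_total = realization[unfolded is_additive_realization_def, THEN conjunct2, THEN conjunct1]
lemmas realization_morphisms = realization[unfolded is_additive_realization_def,
  THEN conjunct2, THEN conjunct2, THEN conjunct2, THEN conjunct1]
lemmas realization_split = realization[unfolded is_additive_realization_def,
  THEN conjunct2, THEN conjunct2, THEN conjunct2, THEN conjunct2, THEN conjunct1]

lemma realizationD:
  assumes "rlz X C A d x y"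
  shows "C \<in> ob X" "A \<in> ob X" "d \<in> Ex X C A" "cd X x \<in> ob X"
    "x \<in> hom X A (cd X x)" "y \<in> hom X (cd X x) C"
  using realization_objects assms by blast+

lemma realization_exists: "C \<in> ob X \<Longrightarrow> A \<in> ob X \<Longrightarrow> d \<in> Ex X C A \<Longrightarrow> \<exists>x y. rlz X C A d x y"
  using realization_total by blast

lemma triangle_morphism_exists:
  "rlz X C A d x y \<Longrightarrow> rlz X C' A' d' x' y' \<Longrightarrow>
    a \<in> hom X A A' \<Longrightarrow> c \<in> hom X C C' \<Longrightarrow> push X C a d = pull X A' c d' \<Longrightarrow>
    \<exists>b. tri_morph X A C d x y A' C' d' x' y' a b c"
  using realization_morphisms by blast

lemma split_triangle:
  "A \<in> ob X \<Longrightarrow> C \<in> ob X \<Longrightarrow> is_biproduct X A C S i1 i2 p1 p2 \<Longrightarrow> rlz X C A (ezero X C A) i1 p2"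
  using realization_split by blast

lemma ET3_morphism:
  "rlz X C A d x y \<Longrightarrow> rlz X C' A' d' x' y' \<Longrightarrow>
    a \<in> hom X A A' \<Longrightarrow> b \<in> hom X (cd X x) (cd X x') \<Longrightarrow> cmp X b x = cmp X x' a \<Longrightarrow>
    \<exists>c. tri_morph X A C d x y A' C' d' x' y' a b c"
  using et3 unfolding ET3_def by blast

lemma ET3op_morphism:
  "rlz X C A d x y \<Longrightarrow> rlz X C' A' d' x' y' \<Longrightarrow>
    b \<in> hom X (cd X x) (cd X x') \<Longrightarrow> c \<in> hom X C C' \<Longrightarrow> cmp X c y = cmp X y' b \<Longrightarrow>
    \<exists>a. tri_morph X A C d x y A' C' d' x' y' a b c"
  using et3op unfolding ET3op_def by blast

lemma push_inflation_eq_ezero: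
  assumes r: "rlz X C A d x y"
  shows "push X C x d = ezero X C (cd X x)"
proof -
  let ?B = "cd X x"
  have ob: "?B \<in> ob X" "A \<in> ob X" using realizationD[OF r] by auto
  obtain S i1 i2 p1 p2 where bp: "is_biproduct X ?B ?B S i1 i2 p1 p2"
    using biproduct_exists ob by blast
  have split: "rlz X ?B ?B (ezero X ?B ?B) i1 p2" using split_triangle bp ob by blast
  have "i1 \<in> hom X (cd X x) (cd X i1)" using biproductD(2)[OF bp] homD by auto
  then obtain c where "tri_morph X A C d x y ?B ?B (ezero X ?B ?B) i1 p2 x i1 c"
    using ET3_morphism[OF r split realizationD(5)[OF r]] by blast
  then have c: "c \<in> hom X C ?B" and eq: "push X C x d = pull X ?B c (ezero X ?B ?B)"
    unfolding tri_morph_def by auto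
  show ?thesis using eq pull_ezero[OF ob(1) c] by simp
qed

lemma pull_deflation_eq_ezero:
  assumes r: "rlz X C A d x y"
  shows "pull X A y d = ezero X (cd X x) A"
proof -
  let ?B = "cd X x"
  have ob: "?B \<in> ob X" using realizationD[OF r] by auto
  obtain S i1 i2 p1 p2 where bp: "is_biproduct X ?B ?B S i1 i2 p1 p2"
    using biproduct_exists ob by blast
  have split: "rlz X ?B ?B (ezero X ?B ?B) i1 p2" using split_triangle bp ob by blast
  have "p2 \<in> hom X (cd X i1) (cd X x)" using biproductD(2,5)[OF bp] homD by auto
  then obtain a where "tri_morph X ?B ?B (ezero X ?B ?B) i1 p2 A C d x y a p2 y"
    using ET3op_morphism[OF split r _ realizationD(6)[OF r]] by blast
  then have a: "a \<in> hom X ?B A" and eq: "push X ?B a (ezero X ?B ?B) = pull X A y d"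
    unfolding tri_morph_def by auto
  show ?thesis using eq push_ezero[OF ob a] by simp
qed

lemma factors_through_deflation:
  assumes r: "rlz X C A d x y" and g: "g \<in> hom X W C"
    and zero: "pull X A g d = ezero X W A"
  shows "\<exists>k\<in>hom X W (cd X x). g = cmp X y k"
proof -
  have ob: "A \<in> ob X" "W \<in> ob X" using realizationD[OF r] hom_ob[OF g] by auto
  obtain S i1 i2 p1 p2 where bp: "is_biproduct X A W S i1 i2 p1 p2"
    using biproduct_exists ob by blast
  note B = biproductD[OF bp]
  have split: "rlz X W A (ezero X W A) i1 p2" using split_triangle bp ob by blast
  have "push X W (idm X A) (ezero X W A) = pull X A g d"
    using push_id ezero_in_Ex ob zero by simp
  then obtain b where "tri_morph X A W (ezero X W A) i1 p2 A C d x y (idm X A) b g"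
    using triangle_morphism_exists[OF split r id_in_hom[OF ob(1)] g] by blast
  then have b: "b \<in> hom X S (cd X x)" and comm: "cmp X g p2 = cmp X y b"
    using B homD unfolding tri_morph_def by auto
  have y: "y \<in> hom X (cd X x) C" using realizationD[OF r] by auto
  have "cmp X y (cmp X b i2) = cmp X (cmp X y b) i2" using comp_assoc B b y by blast
  also have "\<dots> = cmp X (cmp X g p2) i2" using comm by simp
  also have "\<dots> = cmp X g (cmp X p2 i2)" using comp_assoc B g by metis
  also have "\<dots> = g" using B comp_id_right g by simp
  finally show ?thesis using comp_in_hom B b by blast
qed

lemma ker_push_inflation:
  assumes r: "rlz X C A d x y" and t: "t \<in> Ex X W A" and W: "W \<in> ob X"
    and zero: "push X W x t = ezero X W (cd X x)"
  shows "\<exists>h\<in>hom X W C. t = pull X A h d"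
proof -
  let ?B = "cd X x"
  have ob: "A \<in> ob X" "?B \<in> ob X" using realizationD[OF r] by auto
  obtain u v where rt: "rlz X W A t u v" using realization_exists W ob t by blast
  obtain S i1 i2 p1 p2 where bp: "is_biproduct X ?B W S i1 i2 p1 p2"
    using biproduct_exists ob W by blast
  note B = biproductD[OF bp]
  have split: "rlz X W ?B (ezero X W ?B) i1 p2" using split_triangle bp ob W by blast
  have x: "x \<in> hom X A ?B" using realizationD[OF r] by auto
  have "push X W x t = pull X ?B (idm X W) (ezero X W ?B)"
    using pull_id ezero_in_Ex ob zero W by simp
  then obtain b where "tri_morph X A W t u v ?B W (ezero X W ?B) i1 p2 x b (idm X W)"
    using triangle_morphism_exists[OF rt split x id_in_hom[OF W]] by blast
  then have b: "b \<in> hom X (cd X u) S" and comm: "cmp X b u = cmp X i1 x"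
    using B homD unfolding tri_morph_def by auto
  have u: "u \<in> hom X A (cd X u)" using realizationD[OF rt] by auto
  have p1b: "cmp X p1 b \<in> hom X (cd X u) ?B" using comp_in_hom B b by blast
  have "cmp X (cmp X p1 b) u = cmp X p1 (cmp X b u)" using comp_assoc u b B by metis
  also have "\<dots> = cmp X (cmp X p1 i1) x" using comm comp_assoc x B by metis
  also have "\<dots> = cmp X x (idm X A)" using B comp_id_left comp_id_right x by simp
  finally obtain h where "tri_morph X A W t u v A C d x y (idm X A) (cmp X p1 b) h"
    using ET3_morphism[OF rt r id_in_hom[OF ob(1)] p1b] by blast
  then have "h \<in> hom X W C" and "push X W (idm X A) t = pull X A h d"
    unfolding tri_morph_def by auto
  then show ?thesis using push_id ob W t by auto
qed

lemma ker_pull_deflation: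
  assumes r: "rlz X C A d x y" and t: "t \<in> Ex X C W" and W: "W \<in> ob X"
    and zero: "pull X W y t = ezero X (cd X x) W"
  shows "\<exists>f\<in>hom X A W. t = push X C f d"
proof -
  let ?B = "cd X x"
  have ob: "C \<in> ob X" "?B \<in> ob X" using realizationD[OF r] by auto
  obtain u v where rt: "rlz X C W t u v" using realization_exists W ob t by blast
  obtain S i1 i2 p1 p2 where bp: "is_biproduct X W ?B S i1 i2 p1 p2"
    using biproduct_exists ob W by blast
  note B = biproductD[OF bp]
  have split: "rlz X ?B W (ezero X ?B W) i1 p2" using split_triangle bp ob W by blast
  have y: "y \<in> hom X ?B C" using realizationD[OF r] by auto
  have "push X ?B (idm X W) (ezero X ?B W) = pull X W y t"
    using push_id ezero_in_Ex ob zero W by simp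
  then obtain b where "tri_morph X W ?B (ezero X ?B W) i1 p2 W C t u v (idm X W) b y"
    using triangle_morphism_exists[OF split rt id_in_hom[OF W] y] by blast
  then have b: "b \<in> hom X S (cd X u)" and comm: "cmp X y p2 = cmp X v b"
    using B homD unfolding tri_morph_def by auto
  have v: "v \<in> hom X (cd X u) C" using realizationD[OF rt] by auto
  have bi2: "cmp X b i2 \<in> hom X ?B (cd X u)" using comp_in_hom B b by blast
  have "cmp X v (cmp X b i2) = cmp X (cmp X v b) i2" using comp_assoc v b B by metis
  also have "\<dots> = cmp X y (cmp X p2 i2)" using comm comp_assoc y B by metis
  also have "\<dots> = cmp X (idm X C) y" using B comp_id_left comp_id_right y by simp
  finally have "cmp X (idm X C) y = cmp X v (cmp X b i2)" by simp
  then obtain f where "tri_morph X A C d x y W C t u v f (cmp X b i2) (idm X C)"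
    using ET3op_morphism[OF r rt bi2 id_in_hom[OF ob(1)]] by blast
  then have "f \<in> hom X A W" and "push X C f d = pull X W (idm X C) t"
    unfolding tri_morph_def by auto
  then show ?thesis using pull_id ob W t by auto
qed

subsection \<open>Ideals and orthogonality\<close>

lemma ideal_subset_mor: "is_ideal X I \<Longrightarrow> I \<subseteq> mor X"
  unfolding is_ideal_def by blast

lemma ideal_madd: "is_ideal X I \<Longrightarrow> f \<in> I \<inter> hom X A B \<Longrightarrow> g \<in> I \<inter> hom X A B \<Longrightarrow> madd X f g \<in> I"
  unfolding is_ideal_def by blast

lemma ideal_comp_left:
  assumes "is_ideal X I" "g \<in> I" "g \<in> hom X B C" "h \<in> hom X C D"
  shows "cmp X h g \<in> I"
proof -
  have "B \<in> ob X" using hom_ob assms by blast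
  then have "cmp X h (cmp X g (idm X B)) \<in> I"
    using assms id_in_hom unfolding is_ideal_def by blast
  then show ?thesis using comp_id_right assms by simp
qed

lemma ideal_comp_right:
  assumes "is_ideal X I" "f \<in> hom X A B" "g \<in> I" "g \<in> hom X B C"
  shows "cmp X g f \<in> I"
proof -
  have "C \<in> ob X" using hom_ob assms by blast
  then have "cmp X (idm X C) (cmp X g f) \<in> I"
    using assms id_in_hom unfolding is_ideal_def by blast
  then show ?thesis using comp_id_left comp_in_hom assms by metis
qed

lemma subset_lperp_rperp: "M \<subseteq> mor X \<Longrightarrow> M \<subseteq> lperp X (rperp X M)"
  unfolding lperp_def rperp_def by blast

lemma rperpI:
  "g \<in> mor X \<Longrightarrow> (\<And>m d. m \<in> M \<Longrightarrow> d \<in> Ex X (cd X m) (dm X g) \<Longrightarrow>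
    pull X (cd X g) m (push X (cd X m) g d) = ezero X (dm X m) (cd X g)) \<Longrightarrow> g \<in> rperp X M"
  unfolding rperp_def by blast

lemma rperpD:
  "g \<in> rperp X M \<Longrightarrow> m \<in> M \<Longrightarrow> d \<in> Ex X (cd X m) (dm X g) \<Longrightarrow>
    pull X (cd X g) m (push X (cd X m) g d) = ezero X (dm X m) (cd X g)"
  unfolding rperp_def by blast

lemma mzero_in_rperp:
  assumes M: "M \<subseteq> mor X" and ob: "A \<in> ob X" "B \<in> ob X"
  shows "mzero X A B \<in> rperp X M"
proof (rule rperpI)
  have z: "mzero X A B \<in> hom X A B" using mzero_in_hom ob by blast
  then show "mzero X A B \<in> mor X" using homD by blast
  fix m d assume "m \<in> M" and d: "d \<in> Ex X (cd X m) (dm X (mzero X A B))"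
  then have m: "m \<in> hom X (dm X m) (cd X m)" using M mor_in_hom by blast
  have "push X (cd X m) (mzero X A B) d = ezero X (cd X m) B"
    using push_mzero ob hom_ob(2)[OF m] d z homD by auto
  then show "pull X (cd X (mzero X A B)) m (push X (cd X m) (mzero X A B) d)
      = ezero X (dm X m) (cd X (mzero X A B))"
    using pull_ezero[OF ob(2) m] z homD by auto
qed

lemma madd_in_rperp:
  assumes M: "M \<subseteq> mor X" and f: "f \<in> rperp X M \<inter> hom X A B" and g: "g \<in> rperp X M \<inter> hom X A B"
  shows "madd X f g \<in> rperp X M"
proof (rule rperpI)
  have hom: "f \<in> hom X A B" "g \<in> hom X A B" using f g by auto
  then have fg: "madd X f g \<in> hom X A B" using madd_in_hom by blast
  then show "madd X f g \<in> mor X" using homD by blast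
  fix m d assume m: "m \<in> M" and d: "d \<in> Ex X (cd X m) (dm X (madd X f g))"
  have mh: "m \<in> hom X (dm X m) (cd X m)" using m M mor_in_hom by blast
  have ob: "cd X m \<in> ob X" "dm X m \<in> ob X" "B \<in> ob X" using hom_ob mh f by auto
  have dA: "d \<in> Ex X (cd X m) A" using d fg homD by auto
  have push: "push X (cd X m) f d \<in> Ex X (cd X m) B" "push X (cd X m) g d \<in> Ex X (cd X m) B"
    using push_in_Ex ob f g dA by auto
  have "pull X B m (push X (cd X m) (madd X f g) d)
      = eadd X (dm X m) B (pull X B m (push X (cd X m) f d)) (pull X B m (push X (cd X m) g d))"
    using push_madd[OF ob(1) hom dA] pull_eadd[OF ob(3) mh push] by simp
  also have "\<dots> = eadd X (dm X m) B (ezero X (dm X m) B) (ezero X (dm X m) B)"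
    using rperpD[of f M m d] rperpD[of g M m d] f g m dA homD by auto
  also have "\<dots> = ezero X (dm X m) B" using eadd_ezero ezero_in_Ex ob by simp
  finally show "pull X (cd X (madd X f g)) m (push X (cd X m) (madd X f g) d)
      = ezero X (dm X m) (cd X (madd X f g))"
    using fg homD by auto
qed

lemma comp_in_rperp:
  assumes M: "M \<subseteq> mor X" and f: "f \<in> hom X A B" and g: "g \<in> rperp X M \<inter> hom X B C"
    and h: "h \<in> hom X C D"
  shows "cmp X h (cmp X g f) \<in> rperp X M"
proof (rule rperpI)
  have gh: "g \<in> hom X B C" using g by blast
  have gf: "cmp X g f \<in> hom X A C" using comp_in_hom f gh by blast
  have hgf: "cmp X h (cmp X g f) \<in> hom X A D" using comp_in_hom gf h by blast
  then show "cmp X h (cmp X g f) \<in> mor X" using homD by blast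
  fix m d assume m: "m \<in> M" and d: "d \<in> Ex X (cd X m) (dm X (cmp X h (cmp X g f)))"
  have mh: "m \<in> hom X (dm X m) (cd X m)" using m M mor_in_hom by blast
  have ob: "cd X m \<in> ob X" "dm X m \<in> ob X" using hom_ob mh by auto
  have dA: "d \<in> Ex X (cd X m) A" using d hgf homD by auto
  have fd: "push X (cd X m) f d \<in> Ex X (cd X m) B" using push_in_Ex ob f dA by blast
  have gfd: "push X (cd X m) g (push X (cd X m) f d) \<in> Ex X (cd X m) C"
    using push_in_Ex ob gh fd by blast
  have "pull X D m (push X (cd X m) (cmp X h (cmp X g f)) d)
      = pull X D m (push X (cd X m) h (push X (cd X m) g (push X (cd X m) f d)))"
    using push_comp[OF ob(1) gf h dA] push_comp[OF ob(1) f gh dA] by simp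
  also have "\<dots> = push X (dm X m) h (pull X C m (push X (cd X m) g (push X (cd X m) f d)))"
    using push_pull[OF h mh gfd] by simp
  also have "\<dots> = push X (dm X m) h (ezero X (dm X m) C)"
    using rperpD[of g M m "push X (cd X m) f d"] g m fd homD by auto
  also have "\<dots> = ezero X (dm X m) D" using push_ezero[OF ob(2) h] .
  finally show "pull X (cd X (cmp X h (cmp X g f))) m (push X (cd X m) (cmp X h (cmp X g f)) d)
      = ezero X (dm X m) (cd X (cmp X h (cmp X g f)))"
    using hgf homD by auto
qed

lemma rperp_is_ideal: "M \<subseteq> mor X \<Longrightarrow> is_ideal X (rperp X M)"
  unfolding is_ideal_def
  using mzero_in_rperp madd_in_rperp comp_in_rperp by (auto simp: rperp_def)

subsection \<open>Phantom morphisms and the subfunctor \<open>\<I>\<^sup>\<star>\<close>\<close>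

lemma F_inj_subset_rperp_Ph: "F_inj X F \<subseteq> rperp X (Ph X F)"
proof
  fix e assume e: "e \<in> F_inj X F"
  show "e \<in> rperp X (Ph X F)"
  proof (rule rperpI)
    show em: "e \<in> mor X" using e unfolding F_inj_def by blast
    fix m t assume m: "m \<in> Ph X F" and t: "t \<in> Ex X (cd X m) (dm X e)"
    have mm: "m \<in> mor X" using m unfolding Ph_def by blast
    have "pull X (dm X e) m t \<in> F (dm X m) (dm X e)"
      using m t dm_cd_ob[OF em] unfolding Ph_def by blast
    then have "push X (dm X m) e (pull X (dm X e) m t) = ezero X (dm X m) (cd X e)"
      using e dm_cd_ob[OF mm] unfolding F_inj_def by blast
    then show "pull X (cd X e) m (push X (cd X m) e t) = ezero X (dm X m) (cd X e)"
      using push_pull[OF mor_in_hom[OF em] mor_in_hom[OF mm] t] by simp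
  qed
qed

lemma IstarI:
  "C' \<in> ob X \<Longrightarrow> i \<in> M \<Longrightarrow> i \<in> hom X C C' \<Longrightarrow> d \<in> Ex X C' A \<Longrightarrow> pull X A i d \<in> Istar X M C A"
  unfolding Istar_def by blast

lemma IstarE:
  assumes "t \<in> Istar X M C A"
  obtains C' i d where "C' \<in> ob X" "i \<in> M" "i \<in> hom X C C'" "d \<in> Ex X C' A" "t = pull X A i d"
  using assms unfolding Istar_def by blast

lemma rperp_subset_F_inj_Istar: "rperp X M \<subseteq> F_inj X (Istar X M)"
proof
  fix e assume e: "e \<in> rperp X M"
  have em: "e \<in> mor X" using e unfolding rperp_def by blast
  show "e \<in> F_inj X (Istar X M)" unfolding F_inj_def
  proof (intro CollectI conjI ballI em)
    fix C t assume "C \<in> ob X" and "t \<in> Istar X M C (dm X e)"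
    then obtain C' i d where i: "i \<in> M" "i \<in> hom X C C'" "d \<in> Ex X C' (dm X e)"
      and t: "t = pull X (dm X e) i d"
      by (blast elim: IstarE)
    have "push X C e t = pull X (cd X e) i (push X C' e d)"
      using push_pull[OF mor_in_hom[OF em] i(2,3)] t by simp
    also have "\<dots> = ezero X C (cd X e)"
      using rperpD[OF e i(1)] i(3) homD[OF i(2)] by simp
    finally show "push X C e t = ezero X C (cd X e)" .
  qed
qed

lemma subset_Ph_Istar: "M \<subseteq> mor X \<Longrightarrow> M \<subseteq> Ph X (Istar X M)"
  unfolding Ph_def Istar_def using dm_cd_ob mor_in_hom by blast

lemma Ph_Istar_subset_lperp_rperp: "Ph X (Istar X M) \<subseteq> lperp X (rperp X M)"
proof
  fix p assume p: "p \<in> Ph X (Istar X M)"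
  then have pm: "p \<in> mor X" unfolding Ph_def by blast
  show "p \<in> lperp X (rperp X M)" unfolding lperp_def
  proof (intro CollectI conjI ballI pm)
    fix m d assume m: "m \<in> rperp X M" and d: "d \<in> Ex X (cd X p) (dm X m)"
    have mm: "m \<in> mor X" using m unfolding rperp_def by blast
    have "pull X (dm X m) p d \<in> Istar X M (dm X p) (dm X m)"
      using p d dm_cd_ob[OF mm] unfolding Ph_def by blast
    then obtain C' i d' where i: "i \<in> M" "i \<in> hom X (dm X p) C'" "d' \<in> Ex X C' (dm X m)"
      and pd: "pull X (dm X m) p d = pull X (dm X m) i d'"
      by (blast elim: IstarE)
    have "pull X (cd X m) p (push X (cd X p) m d) = push X (dm X p) m (pull X (dm X m) p d)"
      using push_pull[OF mor_in_hom[OF mm] mor_in_hom[OF pm] d] by simp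
    also have "\<dots> = pull X (cd X m) i (push X C' m d')"
      using pd push_pull[OF mor_in_hom[OF mm] i(2,3)] by simp
    also have "\<dots> = ezero X (dm X p) (cd X m)"
      using rperpD[OF m i(1)] i(3) homD[OF i(2)] by simp
    finally show "pull X (cd X m) p (push X (cd X p) m d) = ezero X (dm X p) (cd X m)" .
  qed
qed

lemma Ph_Istar_eq:
  assumes "M \<subseteq> mor X" "M = lperp X (rperp X M)"
  shows "M = Ph X (Istar X M)"
proof
  show "M \<subseteq> Ph X (Istar X M)" using subset_Ph_Istar[OF assms(1)] .
  show "Ph X (Istar X M) \<subseteq> M"
    using Ph_Istar_subset_lperp_rperp[of M] unfolding assms(2)[symmetric] .
qed

lemma extension_on_biproduct:
  assumes bp: "is_biproduct X C1 C2 S j1 j2 p1 p2" and A: "A \<in> ob X"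
    and d1: "d1 \<in> Ex X C1 A" and d2: "d2 \<in> Ex X C2 A"
  shows "\<exists>D\<in>Ex X S A. pull X A j1 D = d1 \<and> pull X A j2 D = d2"
proof -
  note B = biproductD[OF bp]
  have ob: "C1 \<in> ob X" "C2 \<in> ob X" using hom_ob B by auto
  have pd: "pull X A p1 d1 \<in> Ex X S A" "pull X A p2 d2 \<in> Ex X S A"
    using pull_in_Ex A B d1 d2 by blast+
  define D where "D = eadd X S A (pull X A p1 d1) (pull X A p2 d2)"
  have "pull X A j1 D = eadd X C1 A (pull X A (cmp X p1 j1) d1) (pull X A (cmp X p2 j1) d2)"
    unfolding D_def using pull_eadd[OF A B(2) pd] pull_comp[OF A B(4,2) d1] pull_comp[OF A B(5,2) d2]
    by simp
  also have "\<dots> = d1"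
    using B(6,9) pull_id[OF A ob(1) d1] pull_mzero[OF A ob d2] eadd_ezero A ob d1 by simp
  finally have 1: "pull X A j1 D = d1" .
  have "pull X A j2 D = eadd X C2 A (pull X A (cmp X p1 j2) d1) (pull X A (cmp X p2 j2) d2)"
    unfolding D_def using pull_eadd[OF A B(3) pd] pull_comp[OF A B(4,3) d1] pull_comp[OF A B(5,3) d2]
    by simp
  also have "\<dots> = d2"
    using B(7,8) pull_id[OF A ob(2) d2] pull_mzero[OF A ob(2,1) d1] eadd_ezero eadd_comm ezero_in_Ex
      A ob d2 by simp
  finally have 2: "pull X A j2 D = d2" .
  have "D \<in> Ex X S A" unfolding D_def using eadd_in_Ex pd B(1) A by blast
  then show ?thesis using 1 2 by blast
qed

context
  fixes I assumes I: "is_ideal X I"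
begin

lemma Istar_subset_Ex: "A \<in> ob X \<Longrightarrow> Istar X I C A \<subseteq> Ex X C A"
  using pull_in_Ex by (blast elim: IstarE)

lemma ezero_in_Istar:
  assumes "C \<in> ob X" "A \<in> ob X"
  shows "ezero X C A \<in> Istar X I C A"
proof -
  have "mzero X C C \<in> I" using I assms unfolding is_ideal_def by blast
  then have "pull X A (mzero X C C) (ezero X C A) \<in> Istar X I C A"
    using IstarI mzero_in_hom ezero_in_Ex assms by blast
  then show ?thesis using pull_mzero ezero_in_Ex assms by simp
qed

text \<open>The sum of \<open>i\<^sup>\<star>d\<^sub>1\<close> and \<open>i'\<^sup>\<star>d\<^sub>2\<close> is the pullback along \<open>[i;i'] : C \<rightarrow> C\<^sub>1 \<oplus> C\<^sub>2\<close>
  of an extension restricting to \<open>d\<^sub>1\<close> and \<open>d\<^sub>2\<close>.\<close>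
lemma eadd_in_Istar:
  assumes C: "C \<in> ob X" and A: "A \<in> ob X" and d: "d \<in> Istar X I C A" and e: "e \<in> Istar X I C A"
  shows "eadd X C A d e \<in> Istar X I C A"
proof -
  obtain C1 i d1 where i: "C1 \<in> ob X" "i \<in> I" "i \<in> hom X C C1" "d1 \<in> Ex X C1 A"
    and d_eq: "d = pull X A i d1" using d by (rule IstarE)
  obtain C2 i' d2 where i': "C2 \<in> ob X" "i' \<in> I" "i' \<in> hom X C C2" "d2 \<in> Ex X C2 A"
    and e_eq: "e = pull X A i' d2" using e by (rule IstarE)
  obtain S j1 j2 p1 p2 where bp: "is_biproduct X C1 C2 S j1 j2 p1 p2"
    using biproduct_exists i i' by blast
  note B = biproductD[OF bp]
  obtain D where D: "D \<in> Ex X S A" "pull X A j1 D = d1" "pull X A j2 D = d2"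
    using extension_on_biproduct[OF bp A i(4) i'(4)] by blast
  define k where "k = madd X (cmp X j1 i) (cmp X j2 i')"
  have ji: "cmp X j1 i \<in> hom X C S" "cmp X j2 i' \<in> hom X C S" using comp_in_hom B i i' by blast+
  have k: "k \<in> hom X C S" unfolding k_def using madd_in_hom ji by blast
  have "k \<in> I" unfolding k_def
    using ideal_madd[OF I] ideal_comp_left[OF I i(2,3) B(2)] ideal_comp_left[OF I i'(2,3) B(3)] ji
    by blast
  moreover have "pull X A k D = eadd X C A d e"
    unfolding k_def using pull_madd[OF A ji D(1)] pull_comp[OF A B(2) i(3) D(1)]
      pull_comp[OF A B(3) i'(3) D(1)] D d_eq e_eq by simp
  ultimately show ?thesis using IstarI[OF B(1) _ k D(1)] by metis
qed

lemma Istar_inverse: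
  assumes C: "C \<in> ob X" and A: "A \<in> ob X" and d: "d \<in> Istar X I C A"
    and e: "e \<in> Ex X C A" and sum: "eadd X C A d e = ezero X C A"
  shows "e \<in> Istar X I C A"
proof -
  obtain C' i d' where i: "C' \<in> ob X" "i \<in> I" "i \<in> hom X C C'" "d' \<in> Ex X C' A"
    and d_eq: "d = pull X A i d'" using d by (rule IstarE)
  obtain n where n: "n \<in> Ex X C' A" "eadd X C' A d' n = ezero X C' A"
    using eadd_inverse i A by blast
  have "eadd X C A d (pull X A i n) = ezero X C A"
    using pull_eadd[OF A i(3,4) n(1)] n pull_ezero A i d_eq by simp
  then have "e = pull X A i n"
    using eadd_inverse_unique[OF C A _ e _ sum] pull_in_Ex A i n d_eq by blast
  then show ?thesis using IstarI i n by blast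
qed

lemma push_in_Istar:
  assumes a: "a \<in> hom X A A'" and d: "d \<in> Istar X I C A"
  shows "push X C a d \<in> Istar X I C A'"
proof -
  obtain C' i d' where i: "C' \<in> ob X" "i \<in> I" "i \<in> hom X C C'" "d' \<in> Ex X C' A"
    and d_eq: "d = pull X A i d'" using d by (rule IstarE)
  have "push X C a d = pull X A' i (push X C' a d')" using push_pull a i d_eq by simp
  then show ?thesis using IstarI i push_in_Ex a by metis
qed

lemma pull_in_Istar:
  assumes A: "A \<in> ob X" and c: "c \<in> hom X C' C" and d: "d \<in> Istar X I C A"
  shows "pull X A c d \<in> Istar X I C' A"
proof -
  obtain C'' i d' where i: "C'' \<in> ob X" "i \<in> I" "i \<in> hom X C C''" "d' \<in> Ex X C'' A"
    and d_eq: "d = pull X A i d'" using d by (rule IstarE)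
  have "pull X A c d = pull X A (cmp X i c) d'" using pull_comp[OF A i(3) c i(4)] d_eq by simp
  moreover have "cmp X i c \<in> I" "cmp X i c \<in> hom X C' C''"
    using ideal_comp_right[OF I c i(2,3)] comp_in_hom c i by blast+
  ultimately show ?thesis using IstarI i by metis
qed

lemma is_additive_subfunctor_Istar: "is_additive_subfunctor X (Istar X I)"
  unfolding is_additive_subfunctor_def
  by (intro conjI ballI allI impI Istar_subset_Ex ezero_in_Istar eadd_in_Istar push_in_Istar
      pull_in_Istar)
    (auto intro: Istar_inverse)

end

subsection \<open>Special precovers and preenvelopes\<close>

lemma special_precover_hom: "special_precover X M C i \<Longrightarrow> i \<in> M \<and> i \<in> hom X (dm X i) C"
  unfolding special_precover_def using realizationD(6) homD by metis

lemma special_precover_factorization: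
  assumes sp: "special_precover X M C i"
    and g: "g \<in> hom X W C" "g \<in> lperp X (rperp X M)"
  shows "\<exists>k\<in>hom X W (dm X i). g = cmp X i k"
proof -
  obtain A d x y A' d' x' b j where r: "rlz X C A d x y" and r': "rlz X C A' d' x' i"
    and tm: "tri_morph X A C d x y A' C d' x' i j b (idm X C)" and j: "j \<in> rperp X M"
    using sp unfolding special_precover_def by blast
  have jh: "j \<in> hom X A A'" and "push X C j d = pull X A' (idm X C) d'"
    using tm unfolding tri_morph_def by auto
  then have d': "d' = push X C j d" using pull_id realizationD[OF r'] by simp
  have "pull X A' g d' = ezero X W A'"
    using g j d' realizationD(3)[OF r] homD[OF jh] homD[OF g(1)] unfolding lperp_def by force
  then obtain k where "k \<in> hom X W (cd X x')" "g = cmp X i k"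
    using factors_through_deflation[OF r' g(1)] by blast
  moreover have "dm X i = cd X x'" using realizationD(6)[OF r'] homD by blast
  ultimately show ?thesis by auto
qed

lemma lperp_rperp_eq_if_special_precovering:
  assumes I: "is_ideal X I" and spc: "special_precovering X I"
  shows "lperp X (rperp X I) = I"
proof
  show "lperp X (rperp X I) \<subseteq> I"
  proof
    fix g assume g: "g \<in> lperp X (rperp X I)"
    then have gm: "g \<in> mor X" unfolding lperp_def by blast
    obtain i where sp: "special_precover X I (cd X g) i"
      using spc dm_cd_ob[OF gm] unfolding special_precovering_def by blast
    obtain k where "k \<in> hom X (dm X g) (dm X i)" "g = cmp X i k"
      using special_precover_factorization[OF sp mor_in_hom[OF gm] g] by blast
    then show "g \<in> I" using ideal_comp_right[OF I] special_precover_hom[OF sp] by metis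
  qed
  show "I \<subseteq> lperp X (rperp X I)" using subset_lperp_rperp ideal_subset_mor[OF I] .
qed

text \<open>Every \<open>i\<^sup>\<star>\<delta>\<close> is \<open>f\<^sub>\<star>(i\<^sup>\<star>g)\<close> because \<open>p\<^sup>\<star>\<delta> = 0\<close>, and \<open>i\<^sup>\<star>g\<close> is a pullback of the
  \<open>\<bbbF>\<close>-extension \<open>\<epsilon>\<close> because \<open>e\<^sub>\<star>i\<^sup>\<star>g = i\<^sup>\<star>e\<^sub>\<star>g = 0\<close>.\<close>
lemma pushout_deflation_in_Ph:
  assumes F: "is_additive_subfunctor X F"
    and rg: "rlz X C K g k p"
    and p: "\<forall>A\<in>ob X. \<forall>d\<in>Ex X C A. pull X A p d = ezero X (dm X p) A"
    and re: "rlz X Y K \<epsilon> e y" and \<epsilon>: "\<epsilon> \<in> F Y K"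
    and ri: "rlz X C (cd X e) (push X C e g) x i"
  shows "i \<in> Ph X F"
  unfolding Ph_def
proof (intro CollectI conjI ballI)
  have K: "K \<in> ob X" "g \<in> Ex X C K" using realizationD[OF rg] by auto
  have e: "e \<in> hom X K (cd X e)" using realizationD(5)[OF re] .
  have i: "i \<in> hom X (cd X x) C" using realizationD(6)[OF ri] .
  have Z: "cd X x \<in> ob X" using realizationD(4)[OF ri] .
  then show "i \<in> mor X" using i homD by blast
  fix A \<delta> assume A: "A \<in> ob X" and \<delta>: "\<delta> \<in> Ex X (cd X i) A"
  have \<delta>C: "\<delta> \<in> Ex X C A" using \<delta> homD[OF i] by simp
  have "pull X A p \<delta> = ezero X (cd X k) A"
    using p A \<delta>C homD realizationD(6)[OF rg] by metis
  then obtain f where f: "f \<in> hom X K A" "\<delta> = push X C f g"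
    using ker_pull_deflation[OF rg \<delta>C A] by blast
  have ig: "pull X K i g \<in> Ex X (cd X x) K" using pull_in_Ex K i by blast
  have "push X (cd X x) e (pull X K i g) = pull X (cd X e) i (push X C e g)"
    using push_pull[OF e i K(2)] .
  also have "\<dots> = ezero X (cd X x) (cd X e)" using pull_deflation_eq_ezero[OF ri] .
  finally obtain h where h: "h \<in> hom X (cd X x) Y" "pull X K i g = pull X K h \<epsilon>"
    using ker_push_inflation[OF re ig Z] by blast
  have "pull X K i g \<in> F (cd X x) K"
    using F h K \<epsilon> unfolding is_additive_subfunctor_def by metis
  then have "push X (cd X x) f (pull X K i g) \<in> F (cd X x) A"
    using F f Z unfolding is_additive_subfunctor_def by blast
  moreover have "pull X A i \<delta> = push X (cd X x) f (pull X K i g)"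
    using push_pull[OF f(1) i K(2)] f(2) by simp
  ultimately show "pull X A i \<delta> \<in> F (dm X i) A" using homD[OF i] by simp
qed

lemma special_precovering_Ph:
  assumes proj: "enough_proj_morphisms X" and F: "is_additive_subfunctor X F"
    and inj: "enough_inj_morphisms X F"
  shows "special_precovering X (Ph X F)"
  unfolding special_precovering_def
proof
  fix C assume C: "C \<in> ob X"
  obtain K g k p where rg: "rlz X C K g k p"
    and p: "\<forall>A\<in>ob X. \<forall>d\<in>Ex X C A. pull X A p d = ezero X (dm X p) A"
    using proj C unfolding enough_proj_morphisms_def by blast
  have K: "K \<in> ob X" "g \<in> Ex X C K" using realizationD[OF rg] by auto
  obtain Y \<epsilon> e y where re: "rlz X Y K \<epsilon> e y" and \<epsilon>: "\<epsilon> \<in> F Y K" and e_inj: "e \<in> F_inj X F"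
    using inj K unfolding enough_inj_morphisms_def by blast
  have e: "e \<in> hom X K (cd X e)" using realizationD(5)[OF re] .
  have eg: "push X C e g \<in> Ex X C (cd X e)" using push_in_Ex C e K by blast
  then obtain x i where ri: "rlz X C (cd X e) (push X C e g) x i"
    using realization_exists C hom_ob(2)[OF e] by blast
  have "push X C e g = pull X (cd X e) (idm X C) (push X C e g)"
    using pull_id hom_ob(2)[OF e] C eg by simp
  then obtain b where "tri_morph X K C g k p (cd X e) C (push X C e g) x i e b (idm X C)"
    using triangle_morphism_exists[OF rg ri e id_in_hom[OF C]] by blast
  moreover have "e \<in> rperp X (Ph X F)" using F_inj_subset_rperp_Ph e_inj by blast
  moreover have "i \<in> Ph X F" using pushout_deflation_in_Ph[OF F rg p re \<epsilon> ri] .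
  moreover have "cd X i = C" using realizationD(6)[OF ri] homD by blast
  ultimately show "\<exists>i. special_precover X (Ph X F) C i"
    unfolding special_precover_def using rg ri by blast
qed

text \<open>Salce's trick: as \<open>cd x\<close> is injective, every \<open>t \<in> \<bbbE>(-,A)\<close> is some \<open>h\<^sup>\<star>\<delta>\<close>; for \<open>m \<in> \<I>\<close>
  the morphism \<open>h\<circ>m\<close> factors through \<open>i\<close>, and \<open>e\<^sub>\<star>i\<^sup>\<star>\<delta> = 0\<close>.\<close>
lemma pullback_inflation_in_rperp:
  assumes I: "is_ideal X I" and sp: "special_precover X I C i"
    and r: "rlz X C A \<delta> x y" and E: "\<forall>W\<in>ob X. Ex X W (cd X x) = {ezero X W (cd X x)}"
    and re: "rlz X (dm X i) A (pull X A i \<delta>) e y'"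
  shows "e \<in> rperp X I"
proof (rule rperpI)
  have i: "i \<in> hom X (dm X i) C" using special_precover_hom[OF sp] by blast
  have e: "e \<in> hom X A (cd X e)" using realizationD(5)[OF re] .
  have ob: "A \<in> ob X" "cd X e \<in> ob X" "\<delta> \<in> Ex X C A" using realizationD[OF r] hom_ob[OF e] by auto
  show "e \<in> mor X" using e homD by blast
  fix m t assume m: "m \<in> I" and "t \<in> Ex X (cd X m) (dm X e)"
  then have t: "t \<in> Ex X (cd X m) A" using e homD by auto
  have mh: "m \<in> hom X (dm X m) (cd X m)" using m ideal_subset_mor[OF I] mor_in_hom by blast
  have V: "cd X m \<in> ob X" using hom_ob mh by blast
  have "push X (cd X m) x t = ezero X (cd X m) (cd X x)"
    using E V push_in_Ex[OF V realizationD(5)[OF r] t] by blast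
  then obtain h where h: "h \<in> hom X (cd X m) C" "t = pull X A h \<delta>"
    using ker_push_inflation[OF r t V] by blast
  have "cmp X h m \<in> lperp X (rperp X I)"
    using ideal_comp_left[OF I m mh h(1)] subset_lperp_rperp ideal_subset_mor[OF I] by blast
  then obtain k where k: "k \<in> hom X (dm X m) (dm X i)" "cmp X h m = cmp X i k"
    using special_precover_factorization[OF sp comp_in_hom[OF mh h(1)]] by blast
  have e\<delta>: "push X C e \<delta> \<in> Ex X C (cd X e)" using push_in_Ex r e ob realizationD by blast
  have "pull X (cd X e) m (push X (cd X m) e t) = pull X (cd X e) (cmp X h m) (push X C e \<delta>)"
    using push_pull[OF e h(1) ob(3)] h(2) pull_comp[OF ob(2) h(1) mh e\<delta>] by simp
  also have "\<dots> = pull X (cd X e) k (push X (dm X i) e (pull X A i \<delta>))"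
    using k(2) pull_comp[OF ob(2) i k(1) e\<delta>] push_pull[OF e i ob(3)] by simp
  also have "\<dots> = ezero X (dm X m) (cd X e)"
    using push_inflation_eq_ezero[OF re] pull_ezero[OF ob(2) k(1)] by simp
  finally show "pull X (cd X e) m (push X (cd X m) e t) = ezero X (dm X m) (cd X e)" .
qed

lemma special_preenveloping_rperp:
  assumes I: "is_ideal X I" and inj: "enough_inj_objects X" and spc: "special_precovering X I"
  shows "special_preenveloping X (rperp X I)"
  unfolding special_preenveloping_def
proof
  fix A assume A: "A \<in> ob X"
  obtain C \<delta> x y where r: "rlz X C A \<delta> x y"
    and E: "\<forall>W\<in>ob X. Ex X W (cd X x) = {ezero X W (cd X x)}"
    using inj A unfolding enough_inj_objects_def by blast
  have C: "C \<in> ob X" "\<delta> \<in> Ex X C A" using realizationD[OF r] by auto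
  obtain i where sp: "special_precover X I C i"
    using spc C unfolding special_precovering_def by blast
  have i: "i \<in> I" "i \<in> hom X (dm X i) C" using special_precover_hom[OF sp] by auto
  have i\<delta>: "pull X A i \<delta> \<in> Ex X (dm X i) A" using pull_in_Ex A i C by blast
  obtain e y' where re: "rlz X (dm X i) A (pull X A i \<delta>) e y'"
    using realization_exists hom_ob(1)[OF i(2)] A i\<delta> by blast
  have "push X (dm X i) (idm X A) (pull X A i \<delta>) = pull X A i \<delta>"
    using push_id A hom_ob(1)[OF i(2)] i\<delta> by simp
  then obtain b where "tri_morph X A (dm X i) (pull X A i \<delta>) e y' A C \<delta> x y (idm X A) b i"
    using triangle_morphism_exists[OF re r id_in_hom[OF A] i(2)] by blast
  moreover have "e \<in> rperp X I" using pullback_inflation_in_rperp[OF I sp r E re] .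
  moreover have "i \<in> lperp X (rperp X I)"
    using i(1) subset_lperp_rperp ideal_subset_mor[OF I] by blast
  moreover have "dm X e = A" using realizationD(5)[OF re] homD by blast
  ultimately show "\<exists>e. special_preenvelope X (rperp X I) A e"
    unfolding special_preenvelope_def using re r by blast
qed

lemma Ph_Istar_eq_if_cotorsion_pair:
  assumes "is_cotorsion_pair X I J"
  shows "I = Ph X (Istar X I)"
proof -
  have I: "is_ideal X I" and IJ: "I = lperp X J" and J: "J = rperp X I"
    using assms unfolding is_cotorsion_pair_def by blast+
  from IJ have "I = lperp X (rperp X I)" unfolding J .
  then show ?thesis using Ph_Istar_eq[OF ideal_subset_mor[OF I]] by blast
qed

lemma enough_special_inj_morphisms_Istar:
  assumes I: "is_ideal X I" and cc: "complete_cotorsion_pair X I (rperp X I)"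
  shows "enough_special_inj_morphisms X (Istar X I)"
  unfolding enough_special_inj_morphisms_def
proof
  fix A assume A: "A \<in> ob X"
  have eq: "I = lperp X (rperp X I)" and sp: "special_preenveloping X (rperp X I)"
    using cc unfolding complete_cotorsion_pair_def is_cotorsion_pair_def by auto
  have ph: "I = Ph X (Istar X I)"
    using cc Ph_Istar_eq_if_cotorsion_pair unfolding complete_cotorsion_pair_def by blast
  obtain e where "special_preenvelope X (rperp X I) A e"
    using sp A unfolding special_preenveloping_def by blast
  then obtain Y \<delta> y C \<delta>' x' y' b j where e: "e \<in> rperp X I"
    and re: "rlz X Y A \<delta> e y" and r': "rlz X C A \<delta>' x' y'"
    and tm: "tri_morph X A Y \<delta> e y A C \<delta>' x' y' (idm X A) b j" and j: "j \<in> lperp X (rperp X I)"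
    unfolding special_preenvelope_def by blast
  have jh: "j \<in> hom X Y C" and "push X Y (idm X A) \<delta> = pull X A j \<delta>'"
    using tm unfolding tri_morph_def by auto
  then have "\<delta> = pull X A j \<delta>'" using push_id A realizationD[OF re] by simp
  then have "\<delta> \<in> Istar X I Y A" using IstarI j eq jh realizationD[OF r'] by auto
  moreover have "e \<in> F_inj X (Istar X I)" using rperp_subset_F_inj_Istar e by blast
  moreover have "j \<in> Ph X (Istar X I)" using ph eq j by blast
  ultimately show "\<exists>C \<delta> e y. rlz X C A \<delta> e y \<and> \<delta> \<in> Istar X I C A \<and> e \<in> F_inj X (Istar X I) \<and>
      (\<exists>C' \<delta>' x' y' b \<phi>. rlz X C' A \<delta>' x' y' \<and>
         tri_morph X A C \<delta> e y A C' \<delta>' x' y' (idm X A) b \<phi> \<and> \<phi> \<in> Ph X (Istar X I))"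
    using re r' tm by blast
qed

end

lemma enough_special_inj_morphisms_imp_enough_inj_morphisms:
  "enough_special_inj_morphisms X F \<Longrightarrow> enough_inj_morphisms X F"
  unfolding enough_special_inj_morphisms_def enough_inj_morphisms_def by blast

theorem theorem4p5:
  fixes X :: "('o,'m,'e) extri" and I :: "'m set"
  assumes "extriangulated X" and "is_ideal X I"
  shows
    "(enough_proj_morphisms X \<longrightarrow>
        ((\<exists>F. is_additive_subfunctor X F \<and> enough_inj_morphisms X F \<and> I = Ph X F)
            \<longrightarrow> special_precovering X I)
      \<and> ((\<exists>F. is_additive_subfunctor X F \<and> enough_special_inj_morphisms X F \<and> I = Ph X F)
            \<longrightarrow> special_precovering X I))
   \<and> (enough_inj_objects X \<longrightarrow>
        special_precovering X I \<longrightarrow> complete_cotorsion_pair X I (rperp X I))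
   \<and> (complete_cotorsion_pair X I (rperp X I) \<longrightarrow>
        enough_special_inj_morphisms X (Istar X I) \<and> I = Ph X (Istar X I))
   \<and> ((enough_special_inj_morphisms X (Istar X I) \<and> I = Ph X (Istar X I)) \<longrightarrow>
        (\<exists>F. is_additive_subfunctor X F \<and> enough_special_inj_morphisms X F \<and> I = Ph X F))"
proof -
  interpret extriangulated_category X using assms(1) by unfold_locales
  note I = assms(2)
  have II: "complete_cotorsion_pair X I (rperp X I)"
    if "enough_inj_objects X" "special_precovering X I"
    using lperp_rperp_eq_if_special_precovering[OF I that(2)] special_preenveloping_rperp[OF I that]
      rperp_is_ideal[OF ideal_subset_mor[OF I]] I that(2)
    unfolding complete_cotorsion_pair_def is_cotorsion_pair_def by simp
  have III: "I = Ph X (Istar X I)" if "complete_cotorsion_pair X I (rperp X I)"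
    using Ph_Istar_eq_if_cotorsion_pair that unfolding complete_cotorsion_pair_def by blast
  show ?thesis
    using special_precovering_Ph enough_special_inj_morphisms_imp_enough_inj_morphisms II
      enough_special_inj_morphisms_Istar[OF I] III is_additive_subfunctor_Istar[OF I]
    by blast
qed

end
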